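(* Fix an integer $r\ge2$ and two residues $s,k$ modulo $r$. Every $\mathscr C_{sk}^{(r)}$-hom-free $r$-graph is also $\mathscr C_k^{(r)}$-hom-free.
   Context: An $r$-graph is an $r$-uniform hypergraph. For $\ell>r$, the tight cycle $C_\ell^{(r)}$ has vertices $v_1,\dots,v_\ell$ and edges $\{v_i,\dots,v_{i+r-1}\}$, $1\le i\le\ell$ (indices mod $\ell$). A homomorphism $F\to G$ maps $V(F)\to V(G)$ sending each edge onto an edge. For a residue $j$ mod $r$, an $r$-graph is $\mathscr C_j^{(r)}$-hom-free if there is no homomorphism $C_\ell^{(r)}\to G$ for any $\ell>r$ with $\ell\equiv j\pmod r$. *)

theory Defs
  imports Main
begin

definition r_graph :: "nat \<Rightarrow> 'a set \<Rightarrow> 'a set set \<Rightarrow> bool" where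
  "r_graph r V E \<longleftrightarrow> finite V \<and> (\<forall>e\<in>E. e \<subseteq> V \<and> card e = r)"

definition tight_cycle_edge :: "nat \<Rightarrow> nat \<Rightarrow> nat \<Rightarrow> nat set" where
  "tight_cycle_edge r l i = {(i + j) mod l | j. j < r}"

definition tight_cycle_hom :: "nat \<Rightarrow> nat \<Rightarrow> 'a set \<Rightarrow> 'a set set \<Rightarrow> (nat \<Rightarrow> 'a) \<Rightarrow> bool" where
  "tight_cycle_hom r l V E f \<longleftrightarrow>
     f ` {0..<l} \<subseteq> V \<and> (\<forall>i<l. f ` tight_cycle_edge r l i \<in> E)"

definition cycle_hom_free :: "nat \<Rightarrow> nat \<Rightarrow> 'a set \<Rightarrow> 'a set set \<Rightarrow> bool" where
  "cycle_hom_free r j V E \<longleftrightarrow>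
     \<not> (\<exists>l f. l > r \<and> l mod r = j mod r \<and> tight_cycle_hom r l V E f)"

end

theory Submission
  imports Defs
begin

text \<open>A homomorphism from \<open>C\<^sub>l\<close> can be precomposed with the map \<open>C\<^sub>m\<^sub>l \<rightarrow> C\<^sub>l\<close>,
  \<open>x \<mapsto> x mod l\<close>, which winds the longer cycle \<open>m\<close> times around the shorter one.
  Choosing \<open>m = s + r\<close> (positive, and \<open>\<equiv> s (mod r)\<close>) turns a cycle of length
  \<open>l \<equiv> k\<close> into one of length \<open>m l \<equiv> s k (mod r)\<close>.\<close>

lemma tight_cycle_edge_eq_image: "tight_cycle_edge r l i = (\<lambda>j. (i + j) mod l) ` {..<r}"
  unfolding tight_cycle_edge_def by auto

lemma tight_cycle_edge_wind:
  "(\<lambda>x. x mod l) ` tight_cycle_edge r (m * l) i = tight_cycle_edge r l (i mod l)"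
proof -
  have "(i + j) mod (m * l) mod l = (i mod l + j) mod l" for j
    by (simp add: mod_add_left_eq mod_mod_cancel)
  then show ?thesis
    by (simp add: tight_cycle_edge_eq_image image_comp o_def)
qed

lemma tight_cycle_hom_wind:
  assumes "tight_cycle_hom r l V E f"
  shows "tight_cycle_hom r (m * l) V E (\<lambda>x. f (x mod l))"
proof -
  have mod_less: "x mod l < l" if "x < m * l" for x
    using that by (cases "l = 0") simp_all
  have "(\<lambda>x. f (x mod l)) ` tight_cycle_edge r (m * l) i = f ` tight_cycle_edge r l (i mod l)"
    for i by (metis image_image tight_cycle_edge_wind)
  with assms mod_less show ?thesis
    unfolding tight_cycle_hom_def by auto
qed

lemma mult_mod_eq_if_mod_eq:
  fixes l k r s :: nat
  assumes "l mod r = k mod r"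
  shows "(s + r) * l mod r = s * k mod r"
proof -
  have "(s + r) * l mod r = s * l mod r"
    by (simp add: add_mult_distrib)
  also have "\<dots> = s * k mod r"
    using assms by (metis mod_mult_right_eq)
  finally show ?thesis .
qed

theorem proposition3p10:
  fixes r s k :: nat and V :: "'a set" and E :: "'a set set"
  assumes "r \<ge> 2"
    and "r_graph r V E"
    and "cycle_hom_free r (s * k) V E"
  shows "cycle_hom_free r k V E"
proof (rule ccontr)
  assume "\<not> cycle_hom_free r k V E"
  then obtain l f where "l > r" "l mod r = k mod r" and hom: "tight_cycle_hom r l V E f"
    unfolding cycle_hom_free_def by blast
  have "(s + r) * l > r"
    using \<open>l > r\<close> \<open>r \<ge> 2\<close> by (simp add: add_mult_distrib trans_less_add2)
  moreover have "(s + r) * l mod r = s * k mod r"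
    using \<open>l mod r = k mod r\<close> by (rule mult_mod_eq_if_mod_eq)
  ultimately show False
    using assms(3) tight_cycle_hom_wind [OF hom] unfolding cycle_hom_free_def by blast
qed

end
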